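(* Let $n$ be a positive integer and let $A(n)=(a_{ij})$, $p=p(n)$, $pp=pp(n)$, $b(n)$ be as in the context. Let $m\ge 1$ be an integer such that $\overline{p}=pm$ satisfies $\lfloor \overline{p}/2\rfloor> b(n)$, put $r=\lfloor\overline{p}/2\rfloor$, let $v$ be an integer with $v\ge pp+\overline{p}$, and let $B=(b_{ij})_{1\le i,j\le\overline{p}}$ be the $\overline{p}\times\overline{p}$ matrix with $b_{ij}=a_{v+i,v+j}$ if $i-r\le j\le i+r$; $b_{ij}=a_{v+i,v+j-\overline{p}}$ if $j>i+r$; $b_{ij}=a_{v+i,v+j+\overline{p}}$ if $j<i-r$. Then every column of $B$ contains exactly $n+1$ ones.
   Context: $\mathbb{N}=\{1,2,3,\dots\}$. Fix a positive integer $n$. The infinite $\{0,1\}$-matrix $A(n)=(a_{ij})_{i,j\in\mathbb{N}}$ is defined recursively. Its entries are determined row by row (row $1$ first), and within each row from left to right, so that $a_{kl}$ is determined after all $a_{ij}$ with $i<k$ and all $a_{kj}$ with $j<l$. One sets $a_{kl}=1$ if and only if all of the following hold: (1) $\sum_{j<l}a_{kj}<n+1$; (2) $\sum_{i<k}a_{il}<n+1$; (3) there is no pair $(i,j)$ with $1\le i<k$, $1\le j<l$ and $a_{ij}=a_{il}=a_{kj}=1$. Otherwise $a_{kl}=0$. The matrix $A(n)$ is eventually periodic along the diagonal: there exist $c\ge0$, $q\ge1$ with $a_{i+q,j+q}=a_{ij}$ for all $i>c$, $j\ge1$. The period $p=p(n)$ is the smallest $q\ge1$ for which such a $c$ exists,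 and the preperiod $pp=pp(n)$ is the smallest $c\ge 0$ with $a_{i+p,j+p}=a_{ij}$ for all $i>c$, $j\ge 1$. Define $b(n)=\max\{|j-i| : i,j\ge1,\ a_{ij}=1,\ i>pp(n)\}$. *)

theory Defs
  imports Main
begin

text \<open>The matrix A(n), 1-based indices; entries with a zero index are False (unused).
  Entry a_{kl} is computed from entries earlier in row-major order.\<close>

function amat :: "nat \<Rightarrow> nat \<Rightarrow> nat \<Rightarrow> bool" where
  "amat n k l =
     (if k = 0 \<or> l = 0 then False
      else (\<Sum>j\<in>{1..<l}. if amat n k j then (1::nat) else 0) < n + 1
         \<and> (\<Sum>i\<in>{1..<k}. if amat n i l then (1::nat) else 0) < n + 1
         \<and> \<not> (\<exists>i\<in>{1..<k}. \<exists>j\<in>{1..<l}. amat n i j \<and> amat n i l \<and> amat n k j))"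
  by auto
termination
  by (relation "measures [\<lambda>(n,k,l). k, \<lambda>(n,k,l). l]") auto

definition per :: "nat \<Rightarrow> nat" where
  "per n = (LEAST q. q \<ge> 1 \<and> (\<exists>c. \<forall>i>c. \<forall>j\<ge>1. amat n (i+q) (j+q) = amat n i j))"

definition preper :: "nat \<Rightarrow> nat" where
  "preper n = (LEAST c. \<forall>i>c. \<forall>j\<ge>1. amat n (i + per n) (j + per n) = amat n i j)"

definition bwidth :: "nat \<Rightarrow> int" where
  "bwidth n = Max {\<bar>int j - int i\<bar> | i j. i \<ge> 1 \<and> j \<ge> 1 \<and> amat n i j \<and> i > preper n}"

definition Bmat :: "nat \<Rightarrow> nat \<Rightarrow> nat \<Rightarrow> nat \<Rightarrow> nat \<Rightarrow> bool" where
  "Bmat n m v i j =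
     (let P = per n * m; r = P div 2 in
      if int i - int r \<le> int j \<and> j \<le> i + r then amat n (v+i) (v+j)
      else if j > i + r then amat n (v+i) (v+j-P)
      else amat n (v+i) (v+j+P))"

end

theory Submission
  imports Defs
begin

text \<open>
  The rule defining \<open>a\<^sub>k\<^sub>l\<close> only looks at entries \<open>a\<^sub>i\<^sub>j\<close> with \<open>i \<le> k\<close>, \<open>j \<le> l\<close>,
  and it is invariant under transposition, so \<open>A(n)\<close> is symmetric. A counting argument
  shows that row \<open>k\<close> collects its \<open>n + 1\<close> ones before column \<open>k + E\<close>, where
  \<open>E = (n+1)\<^sup>3 + n + 1\<close>. Hence \<open>A(n)\<close> is supported in a band of width \<open>E\<close>, each row is
  determined by the \<open>2E\<close> rows above it, and since there are only finitely many such
  windows the matrix is eventually periodic along the diagonal. Finally, by symmetry the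
  ones of column \<open>v + j\<close> are the ones of row \<open>v + j\<close>, which lies beyond the preperiod and
  so has all its ones within distance \<open>b(n) < r\<close> of the diagonal; periodicity turns the
  wrap-around defining \<open>B\<close> into a bijection between the ones of column \<open>j\<close> of \<open>B\<close> and
  those of column \<open>v + j\<close> of \<open>A(n)\<close>.
\<close>

declare amat.simps [simp del]

definition row_count :: "nat \<Rightarrow> nat \<Rightarrow> nat \<Rightarrow> nat" where
  "row_count n k l = card {j\<in>{1..<l}. amat n k j}"

definition col_count :: "nat \<Rightarrow> nat \<Rightarrow> nat \<Rightarrow> nat" where
  "col_count n k l = card {i\<in>{1..<k}. amat n i l}"

lemma amat_iff:
  "amat n k l \<longleftrightarrow> 1 \<le> k \<and> 1 \<le> l \<and> row_count n k l \<le> n \<and> col_count n k l \<le> n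
     \<and> \<not> (\<exists>i\<in>{1..<k}. \<exists>j\<in>{1..<l}. amat n i j \<and> amat n i l \<and> amat n k j)"
proof -
  have count: "(\<Sum>x\<in>A. if P x then 1 else 0) = card {x\<in>A. P x}" if "finite A" for A and P :: "nat \<Rightarrow> bool"
    using that by (simp add: sum.If_cases Int_def conj_commute)
  show ?thesis
    by (subst amat.simps) (auto simp: count row_count_def col_count_def)
qed

lemma amat_sym: "amat n k l = amat n l k"
proof (induction "k + l" arbitrary: k l rule: less_induct)
  case less
  have IH: "amat n i j \<longleftrightarrow> amat n j i" if "i + j < k + l" for i j
    using less that by blast
  have "row_count n k l = col_count n l k"
    unfolding row_count_def col_count_def by (rule arg_cong[where f = card]) (use IH in auto)
  moreover have "col_count n k l = row_count n l k"
    unfolding row_count_def col_count_def by (rule arg_cong[where f = card]) (use IH in auto)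
  moreover have "amat n i j \<and> amat n i l \<and> amat n k j \<longleftrightarrow> amat n j i \<and> amat n j k \<and> amat n l i"
    if "i < k" "j < l" for i j
    using IH[of i j] IH[of i l] IH[of k j] that by auto
  then have "(\<exists>i\<in>{1..<k}. \<exists>j\<in>{1..<l}. amat n i j \<and> amat n i l \<and> amat n k j)
      \<longleftrightarrow> (\<exists>j\<in>{1..<l}. \<exists>i\<in>{1..<k}. amat n j i \<and> amat n j k \<and> amat n l i)"
    by auto
  ultimately show ?case
    by (subst (1 2) amat_iff) auto
qed

lemma col_count_eq_row_count: "col_count n k l = row_count n l k"
  unfolding col_count_def row_count_def by (metis amat_sym)

lemma amat_indices_pos: "amat n k l \<Longrightarrow> 1 \<le> k \<and> 1 \<le> l"
  using amat_iff by blast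

lemma row_count_Suc: "row_count n k (Suc l) = row_count n k l + (if amat n k l then 1 else 0)"
proof -
  have "{j\<in>{1..<Suc l}. amat n k j} = (if amat n k l then insert l else id) {j\<in>{1..<l}. amat n k j}"
    using amat_indices_pos[of n k l] by (auto simp: less_Suc_eq)
  then show ?thesis
    by (simp add: row_count_def)
qed

lemma row_count_le: "row_count n k l \<le> n + 1"
proof (induction l)
  case 0
  then show ?case by (simp add: row_count_def)
next
  case (Suc l)
  have "amat n k l \<Longrightarrow> row_count n k l \<le> n"
    using amat_iff by blast
  with Suc show ?case
    by (auto simp: row_count_Suc)
qed

lemma row_count_mono: "l \<le> l' \<Longrightarrow> row_count n k l \<le> row_count n k l'"
  unfolding row_count_def by (rule card_mono) auto

lemma card_UN_le_mult:
  assumes "finite I" "\<And>i. i \<in> I \<Longrightarrow> card (A i) \<le> b"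
  shows "card (\<Union>i\<in>I. A i) \<le> card I * b"
  using card_UN_le[OF assms(1), of A] sum_bounded_above[of I "\<lambda>i. card (A i)" b] assms(2)
  by simp

lemma card_saturated_columns_le: "card {l\<in>{1..<L}. n + 1 \<le> col_count n k l} \<le> k - 1"
proof -
  let ?F = "{l\<in>{1..<L}. n + 1 \<le> col_count n k l}"
  have "(n + 1) * card ?F \<le> (\<Sum>l\<in>?F. col_count n k l)"
    using sum_bounded_below[of ?F "n + 1" "col_count n k"] by (simp add: mult.commute)
  also have "\<dots> \<le> (\<Sum>l\<in>{1..<L}. col_count n k l)"
    by (rule sum_mono2) auto
  also have "\<dots> = (\<Sum>i\<in>{1..<k}. row_count n i L)"
    unfolding col_count_def row_count_def by (rule sum_multicount_gen) auto
  also have "\<dots> \<le> (k - 1) * (n + 1)"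
    using sum_bounded_above[of "{1..<k}" "\<lambda>i. row_count n i L" "n + 1"] row_count_le by simp
  finally have "(n + 1) * card ?F \<le> (n + 1) * (k - 1)"
    by (simp add: mult.commute)
  then show ?thesis
    by (metis mult_le_cancel1 add_gr_0 zero_less_one)
qed

lemma card_blocked_columns_le:
  "card (\<Union>j\<in>{j\<in>{1..<L}. amat n k j}. \<Union>i\<in>{i\<in>{1..<k}. amat n i j}. {l\<in>{1..<L}. amat n i l})
     \<le> row_count n k L * ((n + 1) * (n + 1))"
proof -
  have column: "card {i\<in>{1..<k}. amat n i j} \<le> n + 1" for j
    using row_count_le[of n j k] col_count_eq_row_count[of n k j] by (simp add: col_count_def)
  have row: "card {l\<in>{1..<L}. amat n i l} \<le> n + 1" for i
    using row_count_le[of n i L] by (simp add: row_count_def)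
  have inner: "card (\<Union>i\<in>{i\<in>{1..<k}. amat n i j}. {l\<in>{1..<L}. amat n i l}) \<le> (n + 1) * (n + 1)"
    for j
  proof -
    have "card (\<Union>i\<in>{i\<in>{1..<k}. amat n i j}. {l\<in>{1..<L}. amat n i l})
        \<le> card {i\<in>{1..<k}. amat n i j} * (n + 1)"
      by (rule card_UN_le_mult) (simp, rule row)
    also have "\<dots> \<le> (n + 1) * (n + 1)"
      using column[of j] by (rule mult_le_mono1)
    finally show ?thesis .
  qed
  show ?thesis
    unfolding row_count_def by (rule card_UN_le_mult) (simp, rule inner)
qed

definition band_radius :: "nat \<Rightarrow> nat" where
  "band_radius n = (n + 1) ^ 3 + n + 1"

text \<open>If row \<open>k\<close> had at most \<open>n\<close> ones before column \<open>L\<close>, every other column \<open>l < L\<close>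
  would be full above row \<open>k\<close> (at most \<open>k - 1\<close> of them, by double counting) or blocked
  by a rectangle through a one of row \<open>k\<close> (at most \<open>n (n+1)\<^sup>2\<close> of them).\<close>

lemma row_saturated:
  assumes "1 \<le> k" and "k + band_radius n \<le> L"
  shows "row_count n k L = n + 1"
proof (rule ccontr)
  assume "row_count n k L \<noteq> n + 1"
  with row_count_le[of n k L] have few: "row_count n k L \<le> n"
    by linarith
  define ones where "ones = {j\<in>{1..<L}. amat n k j}"
  define full where "full = {l\<in>{1..<L}. n + 1 \<le> col_count n k l}"
  define blocked where "blocked =
    (\<Union>j\<in>ones. \<Union>i\<in>{i\<in>{1..<k}. amat n i j}. {l\<in>{1..<L}. amat n i l})"
  have "{1..<L} \<subseteq> ones \<union> full \<union> blocked"
  proof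
    fix l assume l: "l \<in> {1..<L}"
    show "l \<in> ones \<union> full \<union> blocked"
    proof (rule ccontr)
      assume "l \<notin> ones \<union> full \<union> blocked"
      then have "\<not> amat n k l" "col_count n k l \<le> n"
        and "\<not> (\<exists>i\<in>{1..<k}. \<exists>j\<in>{1..<l}. amat n i j \<and> amat n i l \<and> amat n k j)"
        using l unfolding ones_def full_def blocked_def by auto
      moreover have "row_count n k l \<le> n"
        using row_count_mono[of l L n k] l few by simp
      ultimately show False
        using amat_iff[of n k l] l assms(1) by auto
    qed
  qed
  moreover have "finite blocked"
    unfolding blocked_def ones_def by (intro finite_UN_I) auto
  ultimately have "L - 1 \<le> card (ones \<union> full \<union> blocked)"
    using card_mono[of "ones \<union> full \<union> blocked" "{1..<L}"] by (simp add: ones_def full_def)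
  also have "\<dots> \<le> card ones + card full + card blocked"
    by (meson card_Un_le add_le_mono1 order_trans)
  also have "\<dots> \<le> n + (k - 1) + (n + 1) ^ 3"
  proof (intro add_mono)
    show "card ones \<le> n"
      using few by (simp add: ones_def row_count_def)
    show "card full \<le> k - 1"
      using card_saturated_columns_le[of L n k] by (simp add: full_def)
    have "card blocked \<le> row_count n k L * ((n + 1) * (n + 1))"
      unfolding blocked_def ones_def by (rule card_blocked_columns_le)
    also have "\<dots> \<le> (n + 1) * ((n + 1) * (n + 1))"
      using few by (intro mult_le_mono1) simp
    finally show "card blocked \<le> (n + 1) ^ 3"
      by (simp only: power3_eq_cube mult.assoc)
  qed
  finally show False
    using assms unfolding band_radius_def by linarith
qed

lemma amat_band: "amat n k l \<Longrightarrow> l < k + band_radius n \<and> k < l + band_radius n"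
proof -
  have right: "l < k + band_radius n" if "amat n k l" for k l
  proof (rule ccontr)
    assume "\<not> l < k + band_radius n"
    then have "row_count n k l = n + 1"
      using row_saturated amat_indices_pos[OF that] by simp
    moreover have "row_count n k l \<le> n"
      using that amat_iff by blast
    ultimately show False
      by simp
  qed
  show "amat n k l \<Longrightarrow> ?thesis"
    using right[of k l] right[of l k] amat_sym[of n k l] by blast
qed

lemma card_row: "1 \<le> k \<Longrightarrow> card {l. amat n k l} = n + 1"
proof -
  assume "1 \<le> k"
  moreover have "{l. amat n k l} = {l\<in>{1..<k + band_radius n}. amat n k l}"
    using amat_band[of n k] amat_indices_pos[of n k] by auto
  ultimately show ?thesis
    using row_saturated[of k n "k + band_radius n"] by (simp add: row_count_def)
qed

lemma card_column: "1 \<le> l \<Longrightarrow> card {k. amat n k l} = n + 1"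
proof -
  have "{k. amat n k l} = {k. amat n l k}"
    using amat_sym by blast
  then show "1 \<le> l \<Longrightarrow> ?thesis"
    using card_row[of l n] by simp
qed

definition row_repeats :: "nat \<Rightarrow> nat \<Rightarrow> nat \<Rightarrow> bool" where
  "row_repeats n q i \<longleftrightarrow> (\<forall>j\<ge>1. amat n (i + q) (j + q) = amat n i j)"

lemma column_above_shift:
  assumes k: "2 * band_radius n \<le> k"
    and window: "\<forall>i\<in>{k + 1 - 2 * band_radius n..k}. row_repeats n q i"
    and l: "k + 1 < l + band_radius n"
  shows "{i\<in>{1..<k + 1 + q}. amat n i (l + q)} = (\<lambda>i. i + q) ` {i\<in>{1..<k + 1}. amat n i l}"
proof (intro equalityI subsetI)
  fix i' assume i': "i' \<in> {i\<in>{1..<k + 1 + q}. amat n i (l + q)}"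
  define i where "i = i' - q"
  from amat_band[of n i' "l + q"] i' l k have shift: "i' = i + q" and "i \<in> {k + 1 - 2 * band_radius n..k}"
    by (auto simp: i_def)
  moreover have "1 \<le> l"
    using l k by linarith
  ultimately have "amat n i l"
    using window i' unfolding row_repeats_def by auto
  then show "i' \<in> (\<lambda>i. i + q) ` {i\<in>{1..<k + 1}. amat n i l}"
    using shift \<open>i \<in> _\<close> k by force
next
  fix i' assume "i' \<in> (\<lambda>i. i + q) ` {i\<in>{1..<k + 1}. amat n i l}"
  then obtain i where i: "i' = i + q" "i \<in> {1..<k + 1}" "amat n i l"
    by blast
  with amat_band[of n i l] l have "i \<in> {k + 1 - 2 * band_radius n..k}"
    by auto
  with window i amat_indices_pos[of n i l] show "i' \<in> {i\<in>{1..<k + 1 + q}. amat n i (l + q)}"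
    unfolding row_repeats_def by auto
qed

lemma row_prefix_shift:
  assumes k: "2 * band_radius n \<le> k"
    and prefix: "\<forall>j\<in>{1..<l}. amat n (k + 1 + q) (j + q) = amat n (k + 1) j"
  shows "{j\<in>{1..<l + q}. amat n (k + 1 + q) j} = (\<lambda>j. j + q) ` {j\<in>{1..<l}. amat n (k + 1) j}"
proof (intro equalityI subsetI)
  fix j' assume j': "j' \<in> {j\<in>{1..<l + q}. amat n (k + 1 + q) j}"
  define j where "j = j' - q"
  from amat_band[of n "k + 1 + q" j'] j' k have shift: "j' = j + q" and "j \<in> {1..<l}"
    by (auto simp: j_def)
  with prefix j' show "j' \<in> (\<lambda>j. j + q) ` {j\<in>{1..<l}. amat n (k + 1) j}"
    by force
next
  fix j' assume "j' \<in> (\<lambda>j. j + q) ` {j\<in>{1..<l}. amat n (k + 1) j}"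
  with prefix show "j' \<in> {j\<in>{1..<l + q}. amat n (k + 1 + q) j}"
    by auto
qed

lemma blocking_shift:
  assumes k: "2 * band_radius n \<le> k"
    and window: "\<forall>i\<in>{k + 1 - 2 * band_radius n..k}. row_repeats n q i"
    and l: "k + 1 < l + band_radius n"
    and prefix: "\<forall>j\<in>{1..<l}. amat n (k + 1 + q) (j + q) = amat n (k + 1) j"
  shows "(\<exists>i\<in>{1..<k + 1 + q}. \<exists>j\<in>{1..<l + q}. amat n i j \<and> amat n i (l + q) \<and> amat n (k + 1 + q) j)
     \<longleftrightarrow> (\<exists>i\<in>{1..<k + 1}. \<exists>j\<in>{1..<l}. amat n i j \<and> amat n i l \<and> amat n (k + 1) j)"
proof -
  let ?col = "{i\<in>{1..<k + 1}. amat n i l}" and ?row = "{j\<in>{1..<l}. amat n (k + 1) j}"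
  have "(\<exists>i\<in>{1..<k + 1 + q}. \<exists>j\<in>{1..<l + q}. amat n i j \<and> amat n i (l + q) \<and> amat n (k + 1 + q) j)
      \<longleftrightarrow> (\<exists>i\<in>{i\<in>{1..<k + 1 + q}. amat n i (l + q)}. \<exists>j\<in>{j\<in>{1..<l + q}. amat n (k + 1 + q) j}. amat n i j)"
    by blast
  also have "\<dots> \<longleftrightarrow> (\<exists>i\<in>?col. \<exists>j\<in>?row. amat n (i + q) (j + q))"
    unfolding column_above_shift[OF k window l] row_prefix_shift[OF k prefix] by blast
  also have "\<dots> \<longleftrightarrow> (\<exists>i\<in>?col. \<exists>j\<in>?row. amat n i j)"
  proof -
    have "i \<in> {k + 1 - 2 * band_radius n..k}" if "i \<in> ?col" for i
      using that amat_band[of n i l] l by auto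
    with window show ?thesis
      unfolding row_repeats_def by auto
  qed
  also have "\<dots> \<longleftrightarrow> (\<exists>i\<in>{1..<k + 1}. \<exists>j\<in>{1..<l}. amat n i j \<and> amat n i l \<and> amat n (k + 1) j)"
    by blast
  finally show ?thesis .
qed

lemma row_repeats_next:
  assumes k: "2 * band_radius n \<le> k"
    and window: "\<forall>i\<in>{k + 1 - 2 * band_radius n..k}. row_repeats n q i"
  shows "row_repeats n q (k + 1)"
  unfolding row_repeats_def
proof (intro allI impI)
  fix l :: nat
  assume "1 \<le> l"
  then show "amat n (k + 1 + q) (l + q) = amat n (k + 1) l"
  proof (induction l rule: less_induct)
    case (less l)
    then have prefix: "\<forall>j\<in>{1..<l}. amat n (k + 1 + q) (j + q) = amat n (k + 1) j"
      by auto
    show ?case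
    proof (cases "k + 1 < l + band_radius n")
      case False
      then show ?thesis
        using amat_band[of n "k + 1" l] amat_band[of n "k + 1 + q" "l + q"] by auto
    next
      case True
      have inj: "inj_on (\<lambda>x. x + q) A" for A :: "nat set"
        by (simp add: inj_on_def)
      have "row_count n (k + 1 + q) (l + q) = row_count n (k + 1) l"
        unfolding row_count_def row_prefix_shift[OF k prefix] by (rule card_image[OF inj])
      moreover have "col_count n (k + 1 + q) (l + q) = col_count n (k + 1) l"
        unfolding col_count_def column_above_shift[OF k window True] by (rule card_image[OF inj])
      ultimately show ?thesis
        using blocking_shift[OF k window True prefix] less.prems amat_iff[of n "k + 1 + q" "l + q"]
          amat_iff[of n "k + 1" l] by simp
    qed
  qed
qed

lemma row_repeats_onwards:
  assumes k: "2 * band_radius n \<le> k"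
    and window: "\<forall>i\<in>{k + 1 - 2 * band_radius n..k}. row_repeats n q i"
  shows "k + 1 - 2 * band_radius n \<le> i \<Longrightarrow> row_repeats n q i"
proof (induction i rule: less_induct)
  case (less i)
  show ?case
  proof (cases "i \<le> k")
    case True
    with window less.prems show ?thesis
      by auto
  next
    case False
    define i' where "i' = i - 1"
    with False have i: "i = i' + 1" "k \<le> i'"
      by auto
    have "\<forall>i''\<in>{i' + 1 - 2 * band_radius n..i'}. row_repeats n q i''"
    proof
      fix i'' assume "i'' \<in> {i' + 1 - 2 * band_radius n..i'}"
      with i show "row_repeats n q i''"
        by (intro less.IH) auto
    qed
    with row_repeats_next[of n i' q] i k show ?thesis
      by simp
  qed
qed

text \<open>The entries of the band in the \<open>2E\<close> rows ending at row \<open>k\<close>: \<open>(d, e)\<close> stands for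
  row \<open>k - d\<close> and column \<open>k - d + e + 1 - E\<close>.\<close>

definition band_window :: "nat \<Rightarrow> nat \<Rightarrow> (nat \<times> nat) set" where
  "band_window n k = {(d, e). d < 2 * band_radius n \<and> e < 2 * band_radius n
     \<and> amat n (k - d) (k - d + e + 1 - band_radius n)}"

lemma band_window_eq_imp_row_repeats:
  assumes k: "3 * band_radius n \<le> k" and "k < k'"
    and same: "band_window n k = band_window n k'"
  shows "\<forall>i\<in>{k + 1 - 2 * band_radius n..k}. row_repeats n (k' - k) i"
  unfolding row_repeats_def
proof (intro ballI allI impI)
  fix i j :: nat
  assume i: "i \<in> {k + 1 - 2 * band_radius n..k}" and j: "1 \<le> j"
  let ?q = "k' - k"
  show "amat n (i + ?q) (j + ?q) = amat n i j"
  proof (cases "j < i + band_radius n \<and> i < j + band_radius n")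
    case False
    then show ?thesis
      using amat_band[of n i j] amat_band[of n "i + ?q" "j + ?q"] by auto
  next
    case True
    define d where "d = k - i"
    define e where "e = j + band_radius n - 1 - i"
    have de: "d < 2 * band_radius n" "e < 2 * band_radius n"
      using True i k by (auto simp: d_def e_def)
    have at_k: "k - d = i" "k - d + e + 1 - band_radius n = j"
      using True i j by (auto simp: d_def e_def)
    have at_k': "k' - d = i + ?q" "k' - d + e + 1 - band_radius n = j + ?q"
      using True i j \<open>k < k'\<close> by (auto simp: d_def e_def)
    have "amat n i j \<longleftrightarrow> (d, e) \<in> band_window n k"
      using de at_k by (simp add: band_window_def)
    also have "\<dots> \<longleftrightarrow> (d, e) \<in> band_window n k'"
      using same by simp
    also have "\<dots> \<longleftrightarrow> amat n (i + ?q) (j + ?q)"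
      using de at_k' by (simp add: band_window_def)
    finally show ?thesis
      by simp
  qed
qed

lemma amat_eventually_periodic: "\<exists>q\<ge>1. \<exists>c. \<forall>i>c. \<forall>j\<ge>1. amat n (i + q) (j + q) = amat n i j"
proof -
  let ?E = "band_radius n"
  have "band_window n ` {3 * ?E..} \<subseteq> Pow ({..<2 * ?E} \<times> {..<2 * ?E})"
    by (auto simp: band_window_def)
  then have "finite (band_window n ` {3 * ?E..})"
    by (rule finite_subset) simp
  then have "\<not> inj_on (band_window n) {3 * ?E..}"
    using finite_imageD infinite_Ici by blast
  then obtain k k' where k: "3 * ?E \<le> k" "k < k'" "band_window n k = band_window n k'"
    unfolding inj_on_def by (metis atLeast_iff linorder_neqE_nat)
  have "row_repeats n (k' - k) i" if "k - 2 * ?E < i" for i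
    using row_repeats_onwards[OF _ band_window_eq_imp_row_repeats[OF k]] k(1) that by simp
  with k(2) show ?thesis
    unfolding row_repeats_def by (intro exI[of _ "k' - k"] conjI exI[of _ "k - 2 * ?E"]) auto
qed

lemma per_periodic: "\<exists>c. \<forall>i>c. \<forall>j\<ge>1. amat n (i + per n) (j + per n) = amat n i j"
  using LeastI_ex[OF amat_eventually_periodic[of n]] unfolding per_def by auto

lemma amat_periodic_multiple:
  assumes "preper n < i" and "1 \<le> j"
  shows "amat n (i + t * per n) (j + t * per n) = amat n i j"
proof (induction t)
  case (Suc t)
  have "\<forall>i>preper n. \<forall>j\<ge>1. amat n (i + per n) (j + per n) = amat n i j"
    unfolding preper_def by (rule LeastI_ex) (rule per_periodic)
  then have "amat n (i + t * per n + per n) (j + t * per n + per n) = amat n (i + t * per n) (j + t * per n)"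
    using assms by simp
  with Suc show ?case
    by (simp add: ac_simps)
qed simp

lemma dist_le_bwidth:
  assumes "preper n < i" and "amat n i j"
  shows "\<bar>int j - int i\<bar> \<le> bwidth n"
proof -
  let ?D = "{\<bar>int j - int i\<bar> | i j. i \<ge> 1 \<and> j \<ge> 1 \<and> amat n i j \<and> i > preper n}"
  have "?D \<subseteq> {0..int (band_radius n)}"
    using amat_band[of n] by fastforce
  then have "finite ?D"
    by (rule finite_subset) simp
  moreover have "\<bar>int j - int i\<bar> \<in> ?D"
    using assms amat_indices_pos[of n i j] by blast
  ultimately show ?thesis
    unfolding bwidth_def by simp
qed

definition wrap :: "(nat \<Rightarrow> nat \<Rightarrow> bool) \<Rightarrow> nat \<Rightarrow> nat \<Rightarrow> nat \<Rightarrow> nat \<Rightarrow> bool" where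
  "wrap a P v i j =
     (let r = P div 2 in
      if int i - int r \<le> int j \<and> j \<le> i + r then a (v + i) (v + j)
      else if j > i + r then a (v + i) (v + j - P)
      else a (v + i) (v + j + P))"

lemma Bmat_eq_wrap: "Bmat n m v = wrap (amat n) (per n * m) v"
  by (simp add: fun_eq_iff Bmat_def wrap_def Let_def)

lemma card_wrap_column:
  fixes a :: "nat \<Rightarrow> nat \<Rightarrow> bool"
  assumes periodic: "\<And>x y. pp < x \<Longrightarrow> 1 \<le> y \<Longrightarrow> a (x + P) (y + P) = a x y"
    and v: "pp + P \<le> v" and j: "j \<in> {1..P}"
    and near: "\<And>g. a g (v + j) \<Longrightarrow> \<bar>int g - int (v + j)\<bar> < int (P div 2)"
  shows "card {i\<in>{1..P}. wrap a P v i j} = card {g. a g (v + j)}"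
proof -
  define r where "r = P div 2"
  define row where "row i =
    (if int i - int r \<le> int j \<and> j \<le> i + r then v + i else if j > i + r then v + i + P else v + i - P)"
    for i
  have entry: "wrap a P v i j = a (row i) (v + j)" if "i \<in> {1..P}" for i
  proof -
    have "a (v + i + P) (v + j - P + P) = a (v + i) (v + j - P)"
      by (rule periodic) (use v j that in auto)
    moreover have "a (v + i - P + P) (v + j + P) = a (v + i - P) (v + j)"
      by (rule periodic) (use v j that in auto)
    ultimately show ?thesis
      using v j unfolding wrap_def row_def r_def[symmetric] by (simp add: Let_def)
  qed
  have "inj_on row {1..P}"
    unfolding inj_on_def row_def using v by auto
  moreover have "{g. a g (v + j)} \<subseteq> row ` {1..P}"
  proof
    fix g assume "g \<in> {g. a g (v + j)}"
    with near have g: "\<bar>int g - int (v + j)\<bar> < int r"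
      by (simp add: r_def)
    have P: "2 * r \<le> P"
      by (simp add: r_def)
    consider "g \<le> v" | "v < g" "g \<le> v + P" | "v + P < g"
      by linarith
    then show "g \<in> row ` {1..P}"
    proof cases
      case 1
      with g P j v show ?thesis
        by (intro image_eqI[of _ _ "g + P - v"]) (auto simp: row_def)
    next
      case 2
      with g P j show ?thesis
        by (intro image_eqI[of _ _ "g - v"]) (auto simp: row_def)
    next
      case 3
      with g P j show ?thesis
        by (intro image_eqI[of _ _ "g - v - P"]) (auto simp: row_def)
    qed
  qed
  ultimately have "{g. a g (v + j)} = row ` {i\<in>{1..P}. wrap a P v i j}"
    using entry by auto
  moreover have "inj_on row {i\<in>{1..P}. wrap a P v i j}"
    using \<open>inj_on row {1..P}\<close> by (rule inj_on_subset) auto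
  ultimately show ?thesis
    by (simp add: card_image)
qed

theorem theorem4p3:
  fixes n m v :: nat
  assumes "n \<ge> 1" and "m \<ge> 1"
    and "int ((per n * m) div 2) > bwidth n"
    and "v \<ge> preper n + per n * m"
  shows "\<forall>j\<in>{1..per n * m}. card {i\<in>{1..per n * m}. Bmat n m v i j} = n + 1"
proof
  fix j assume j: "j \<in> {1..per n * m}"
  have "card {i\<in>{1..per n * m}. wrap (amat n) (per n * m) v i j} = card {g. amat n g (v + j)}"
  proof (rule card_wrap_column[OF _ assms(4) j])
    show "amat n (x + per n * m) (y + per n * m) = amat n x y" if "preper n < x" "1 \<le> y" for x y
      using amat_periodic_multiple[OF that, of m] by (simp add: mult.commute)
    show "\<bar>int g - int (v + j)\<bar> < int (per n * m div 2)" if "amat n g (v + j)" for g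
      using dist_le_bwidth[of n "v + j" g] that amat_sym[of n g] assms(3,4) j by auto
  qed
  with card_column[of "v + j" n] j show "card {i\<in>{1..per n * m}. Bmat n m v i j} = n + 1"
    by (simp add: Bmat_eq_wrap)
qed

end
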